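(* Let $M$ be a free $\mathbb{Z}$-module of rank $2g$ with basis $\{a_1, \dots, a_g, b_1, \dots, b_g\}$ and the skew-symmetric bilinear pairing $\langle \cdot, \cdot \rangle$ determined by $\langle a_{i}, b_{i} \rangle = -1$ and $\langle a_{i}, a_{j} \rangle = \langle b_{i}, b_{j} \rangle = \langle a_{i}, b_{j} \rangle = 0$ for $i < j$. Let $c_{1}, \dots, c_{2g} \in M$ with $c_{i} \equiv a_{(i + 1)/2} + \dots + a_{g} + b_{(i + 1)/2} \pmod{2M}$ for $i$ odd and $c_{i} \equiv a_{i/2 + 1} + \dots + a_{g} + b_{i/2} \pmod{2M}$ for $i$ even. Let $t_{i} = T_{c_{i}} - 1$ and let $\bar{t}_{i}$ be the reduction of $t_{i}$ modulo $2$, an element of $\mathfrak{sp}(M \otimes \mathbb{F}_{2})$, for $1 \leq i \leq 2g$. Then the set $\{\bar{t}_{i}\}_{1 \leq i \leq 2g} \cup \{[\bar{t}_{i}, \bar{t}_{j}]\}_{1 \leq i < j \leq 2g}$ is an $\mathbb{F}_{2}$-basis of $\mathfrak{sp}(M \otimes \mathbb{F}_{2})$.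
   Context: For $c \in M$, $T_c$ is the transvection $v \mapsto v + \langle v, c\rangle c$. $\mathfrak{sp}(M\otimes\mathbb{F}_2)$ is the $\mathbb{F}_2$-Lie algebra of endomorphisms $X$ of $M\otimes\mathbb{F}_2$ with $\langle Xv, w\rangle + \langle v, Xw\rangle = 0$ for all $v,w$ (of dimension $2g^2+g$), with bracket $[X,Y]=XY-YX$. *)

theory Defs
  imports Main "HOL-Library.Z2"
begin

text \<open>Coordinates: M = Z^{2g}; coordinate m-1 is a_m, coordinate g+m-1 is b_m (1 \<le> m \<le> g).\<close>

definition Mset :: "nat \<Rightarrow> (nat \<Rightarrow> int) set" where
  "Mset g = {v. \<forall>k\<ge>2*g. v k = 0}"

definition avec :: "nat \<Rightarrow> nat \<Rightarrow> nat \<Rightarrow> int" where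
  "avec g m = (\<lambda>k. if k = m - 1 then 1 else 0)"

definition bvec :: "nat \<Rightarrow> nat \<Rightarrow> nat \<Rightarrow> int" where
  "bvec g m = (\<lambda>k. if k = g + m - 1 then 1 else 0)"

text \<open>Gram matrix of the pairing on the basis: <a_i,b_i> = -1, <b_i,a_i> = 1, all others 0.\<close>
definition gram :: "nat \<Rightarrow> nat \<Rightarrow> nat \<Rightarrow> int" where
  "gram g k l = (if k < g \<and> l = k + g then -1 else if l < g \<and> k = l + g then 1 else 0)"

definition pair :: "nat \<Rightarrow> (nat \<Rightarrow> int) \<Rightarrow> (nat \<Rightarrow> int) \<Rightarrow> int" where
  "pair g v w = (\<Sum>k<2*g. \<Sum>l<2*g. v k * w l * gram g k l)"

definition transvection :: "nat \<Rightarrow> (nat \<Rightarrow> int) \<Rightarrow> (nat \<Rightarrow> int) \<Rightarrow> (nat \<Rightarrow> int)" where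
  "transvection g c v = (\<lambda>k. v k + pair g v c * c k)"

definition cref :: "nat \<Rightarrow> nat \<Rightarrow> nat \<Rightarrow> int" where
  "cref g i = (if odd i
     then (\<lambda>k. (\<Sum>m\<in>{(i+1) div 2..g}. avec g m k) + bvec g ((i+1) div 2) k)
     else (\<lambda>k. (\<Sum>m\<in>{i div 2 + 1..g}. avec g m k) + bvec g (i div 2) k))"

definition unitvec :: "nat \<Rightarrow> nat \<Rightarrow> int" where
  "unitvec l = (\<lambda>k. if k = l then 1 else 0)"

definition reduce_endo :: "nat \<Rightarrow> ((nat \<Rightarrow> int) \<Rightarrow> (nat \<Rightarrow> int)) \<Rightarrow> nat \<Rightarrow> nat \<Rightarrow> bit" where
  "reduce_endo g f = (\<lambda>k l. if k < 2*g \<and> l < 2*g then of_int (f (unitvec l) k) else 0)"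

definition tbar :: "nat \<Rightarrow> (nat \<Rightarrow> int) \<Rightarrow> nat \<Rightarrow> nat \<Rightarrow> bit" where
  "tbar g c = reduce_endo g (\<lambda>v k. transvection g c v k - v k)"

definition V2 :: "nat \<Rightarrow> (nat \<Rightarrow> bit) set" where
  "V2 g = {v. \<forall>k\<ge>2*g. v k = 0}"

definition pair2 :: "nat \<Rightarrow> (nat \<Rightarrow> bit) \<Rightarrow> (nat \<Rightarrow> bit) \<Rightarrow> bit" where
  "pair2 g v w = (\<Sum>k<2*g. \<Sum>l<2*g. v k * w l * of_int (gram g k l))"

definition apply_mat :: "nat \<Rightarrow> (nat \<Rightarrow> nat \<Rightarrow> bit) \<Rightarrow> (nat \<Rightarrow> bit) \<Rightarrow> (nat \<Rightarrow> bit)" where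
  "apply_mat g X v = (\<lambda>k. if k < 2*g then (\<Sum>l<2*g. X k l * v l) else 0)"

definition Mat2 :: "nat \<Rightarrow> (nat \<Rightarrow> nat \<Rightarrow> bit) set" where
  "Mat2 g = {X. \<forall>k l. (k \<ge> 2*g \<or> l \<ge> 2*g) \<longrightarrow> X k l = 0}"

definition sp2 :: "nat \<Rightarrow> (nat \<Rightarrow> nat \<Rightarrow> bit) set" where
  "sp2 g = {X \<in> Mat2 g. \<forall>v\<in>V2 g. \<forall>w\<in>V2 g.
              pair2 g (apply_mat g X v) w + pair2 g v (apply_mat g X w) = 0}"

definition mat_mult :: "nat \<Rightarrow> (nat \<Rightarrow> nat \<Rightarrow> bit) \<Rightarrow> (nat \<Rightarrow> nat \<Rightarrow> bit) \<Rightarrow> (nat \<Rightarrow> nat \<Rightarrow> bit)" where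
  "mat_mult g X Y = (\<lambda>k l. if k < 2*g \<and> l < 2*g then (\<Sum>m<2*g. X k m * Y m l) else 0)"

definition bracket :: "nat \<Rightarrow> (nat \<Rightarrow> nat \<Rightarrow> bit) \<Rightarrow> (nat \<Rightarrow> nat \<Rightarrow> bit) \<Rightarrow> (nat \<Rightarrow> nat \<Rightarrow> bit)" where
  "bracket g X Y = (\<lambda>k l. mat_mult g X Y k l - mat_mult g Y X k l)"

definition is_F2_basis :: "'i set \<Rightarrow> ('i \<Rightarrow> nat \<Rightarrow> nat \<Rightarrow> bit) \<Rightarrow> (nat \<Rightarrow> nat \<Rightarrow> bit) set \<Rightarrow> bool" where
  "is_F2_basis S f V \<longleftrightarrow> (\<forall>s\<in>S. f s \<in> V) \<and>
     (\<forall>X\<in>V. \<exists>!lam. (\<forall>s. s \<notin> S \<longrightarrow> lam s = 0) \<and>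
                    X = (\<lambda>k l. \<Sum>s\<in>S. lam s * f s k l))"

end

theory Submission
  imports Defs
begin

text \<open>Modulo 2 the pairing becomes the symmetric form B(x, y) = \<Sum> x_k y_{k'}, where k' is the
  partner coordinate (a_m \<leftrightarrow> b_m), and T_c - 1 reduces to the rank-one map v \<mapsto> B(v, c) c. The
  reductions \<gamma>_i of the c_i satisfy B(\<gamma>_i, \<gamma>_j) = 1 for i \<noteq> j and B(\<gamma>_i, \<gamma>_i) = 0, so they are
  a basis of M \<otimes> F_2 whose dual basis is \<delta>_p = \<gamma>_p + \<Sum>_j \<gamma>_j (2g - 1 being odd). Hence
  t_i reduces to \<gamma>_i \<otimes> \<gamma>_i and [t_i, t_j] to \<gamma>_i \<otimes> \<gamma>_j + \<gamma>_j \<otimes> \<gamma>_i. An element X of sp is self-adjoint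
  for B, so it is determined by the symmetric matrix B(X \<delta>_p, \<delta>_q); the family above has exactly
  the elementary symmetric matrices as these coordinates, so it is a basis.\<close>

declare add_bit_eq_xor [simp del] mult_bit_eq_and [simp del] \<comment> \<open>keep bit arithmetic in ring form\<close>

lemma bit_add_self [simp]: "(x::bit) + x = 0"
  by (simp add: add_eq_0_iff2)

lemma bit_eq_if_add_eq_0: "(x::bit) + y = 0 \<Longrightarrow> x = y"
  by (simp add: add_eq_0_iff2)

lemma of_int_bit_eq_if_even_diff: "(2::int) dvd (x - y) \<Longrightarrow> (of_int x :: bit) = of_int y"
proof (elim dvdE)
  fix k assume "x - y = 2 * k"
  then have "x = y + 2 * k" by simp
  then show ?thesis by simp
qed

lemma of_nat_bit_odd: "odd n \<Longrightarrow> (of_nat n :: bit) = 1"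
  by (elim oddE) simp

lemma if_one_zero_mult [simp]: "(if P then 1 else 0) * x = (if P then x else (0::'a::semiring_1))"
  by simp

lemma sum_lessThan_double:
  fixes f :: "nat \<Rightarrow> 'a::comm_monoid_add"
  shows "(\<Sum>k<2*g. f k) = (\<Sum>k<g. f k) + (\<Sum>k<g. f (k + g))"
proof -
  have "(\<Sum>k<2*g. f k) = (\<Sum>k\<in>{0..<g}. f k) + (\<Sum>k\<in>{g..<2*g}. f k)"
    using sum.atLeastLessThan_concat[of 0 g "2*g" f] by (simp add: atLeast0LessThan)
  also have "(\<Sum>k\<in>{g..<2*g}. f k) = (\<Sum>k\<in>{0..<g}. f (k + g))"
    using sum.shift_bounds_nat_ivl[of f 0 g g] by (simp add: mult_2)
  finally show ?thesis by (simp add: atLeast0LessThan)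
qed

section \<open>The symmetric form modulo 2\<close>

definition partner :: "nat \<Rightarrow> nat \<Rightarrow> nat" where
  "partner g k = (if k < g then k + g else k - g)"

definition bform :: "nat \<Rightarrow> (nat \<Rightarrow> bit) \<Rightarrow> (nat \<Rightarrow> bit) \<Rightarrow> bit" where
  "bform g x y = (\<Sum>k<2*g. x k * y (partner g k))"

lemma partner_less: "k < 2*g \<Longrightarrow> partner g k < 2*g"
  by (auto simp add: partner_def)

lemma of_int_gram: "k < 2*g \<Longrightarrow> l < 2*g \<Longrightarrow>
    (of_int (gram g k l) :: bit) = (if l = partner g k then 1 else 0)"
  by (auto simp: gram_def partner_def)

lemma pair2_eq_bform: "pair2 g v w = bform g v w"
proof -
  have "(\<Sum>l<2*g. v k * w l * of_int (gram g k l)) = v k * w (partner g k)" if k: "k < 2*g" for k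
  proof -
    have "(\<Sum>l<2*g. v k * w l * of_int (gram g k l)) = (\<Sum>l<2*g. if l = partner g k then v k * w l else 0)"
      by (rule sum.cong) (auto simp: of_int_gram k)
    also have "\<dots> = v k * w (partner g k)"
      using partner_less[OF k] by (simp add: sum.delta)
    finally show ?thesis .
  qed
  then show ?thesis unfolding pair2_def bform_def by (intro sum.cong) auto
qed

lemma of_int_pair: "(of_int (pair g v w) :: bit) = bform g (\<lambda>k. of_int (v k)) (\<lambda>k. of_int (w k))"
  by (simp add: pair_def pair2_def of_int_sum pair2_eq_bform[symmetric])

lemma bform_eq_sum_pairs: "bform g x y = (\<Sum>k<g. x k * y (k + g) + x (k + g) * y k)"
  unfolding bform_def sum_lessThan_double sum.distrib by (simp add: partner_def)

lemma bform_sym: "bform g x y = bform g y x"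
  unfolding bform_eq_sum_pairs by (intro sum.cong) (simp_all add: mult.commute add.commute)

lemma bform_sum_left: "bform g (\<lambda>k. \<Sum>s\<in>A. a s * x s k) y = (\<Sum>s\<in>A. a s * bform g (x s) y)"
  unfolding bform_def by (simp add: sum_distrib_left sum_distrib_right mult.assoc) (rule sum.swap)

lemma bform_sum_right: "bform g y (\<lambda>k. \<Sum>s\<in>A. a s * x s k) = (\<Sum>s\<in>A. a s * bform g y (x s))"
  by (simp add: bform_sym[of g y] bform_sum_left)

lemma bform_add_left: "bform g (\<lambda>k. x k + y k) z = bform g x z + bform g y z"
  unfolding bform_def by (simp add: distrib_right sum.distrib)

lemma bform_add_right: "bform g z (\<lambda>k. x k + y k) = bform g z x + bform g z y"
  by (simp add: bform_sym[of g z] bform_add_left)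

lemma bform_scale_left: "bform g (\<lambda>k. a * x k) y = a * bform g x y"
  unfolding bform_def by (simp add: sum_distrib_left mult.assoc)

lemma bform_scale_right: "bform g y (\<lambda>k. a * x k) = a * bform g y x"
  by (simp add: bform_sym[of g y] bform_scale_left)

definition unit2 :: "nat \<Rightarrow> nat \<Rightarrow> bit" where
  "unit2 m = (\<lambda>k. if k = m then 1 else 0)"

lemma unit2_V2: "l < 2*g \<Longrightarrow> unit2 l \<in> V2 g"
  by (simp add: unit2_def V2_def)

lemma V2_eq_sum_unit2: "v \<in> V2 g \<Longrightarrow> v = (\<lambda>k. \<Sum>m<2*g. v m * unit2 m k)"
  by (rule ext, cases "k < 2*g")
    (auto simp: unit2_def V2_def if_distrib sum.delta cong: if_cong)

lemma bform_unit2: "l < 2*g \<Longrightarrow> bform g (unit2 l) y = y (partner g l)"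
  unfolding bform_def unit2_def by (simp add: sum.delta)

lemma apply_mat_V2: "apply_mat g X v \<in> V2 g"
  by (simp add: apply_mat_def V2_def)

lemma apply_mat_sum:
  "apply_mat g (\<lambda>k l. \<Sum>s\<in>A. a s * X s k l) v = (\<lambda>k. \<Sum>s\<in>A. a s * apply_mat g (X s) v k)"
  unfolding apply_mat_def
  by (rule ext) (simp add: sum_distrib_left sum_distrib_right mult.assoc sum.swap[of _ A])

lemma apply_mat_add:
  "apply_mat g (\<lambda>k l. X k l + Y k l) v = (\<lambda>k. apply_mat g X v k + apply_mat g Y v k)"
  unfolding apply_mat_def by (rule ext) (simp add: distrib_right sum.distrib)

lemma apply_mat_unit2: "X \<in> Mat2 g \<Longrightarrow> k < 2*g \<Longrightarrow> l < 2*g \<Longrightarrow> apply_mat g X (unit2 l) k = X k l"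
  unfolding apply_mat_def unit2_def by (simp add: sum.delta' if_distrib cong: if_cong)

lemma Mat2_eqI:
  assumes X: "X \<in> Mat2 g" and Y: "Y \<in> Mat2 g"
    and eq: "\<And>v. v \<in> V2 g \<Longrightarrow> apply_mat g X v = apply_mat g Y v"
  shows "X = Y"
proof (intro ext)
  fix k l
  show "X k l = Y k l"
  proof (cases "k < 2*g \<and> l < 2*g")
    case True
    then show ?thesis
      using apply_mat_unit2[OF X, of k l] apply_mat_unit2[OF Y, of k l] eq[OF unit2_V2[of l]] by auto
  next
    case False
    then show ?thesis using X Y by (auto simp: Mat2_def)
  qed
qed

text \<open>The matrix of v \<mapsto> B(v, y) x.\<close>
definition rank_one :: "nat \<Rightarrow> (nat \<Rightarrow> bit) \<Rightarrow> (nat \<Rightarrow> bit) \<Rightarrow> nat \<Rightarrow> nat \<Rightarrow> bit" where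
  "rank_one g x y = (\<lambda>k l. if k < 2*g \<and> l < 2*g then x k * y (partner g l) else 0)"

definition rank_one_sym :: "nat \<Rightarrow> (nat \<Rightarrow> bit) \<Rightarrow> (nat \<Rightarrow> bit) \<Rightarrow> nat \<Rightarrow> nat \<Rightarrow> bit" where
  "rank_one_sym g x y = (\<lambda>k l. rank_one g x y k l + rank_one g y x k l)"

lemma rank_one_Mat2: "rank_one g x y \<in> Mat2 g"
  by (simp add: rank_one_def Mat2_def)

lemma apply_rank_one: "x \<in> V2 g \<Longrightarrow> apply_mat g (rank_one g x y) v = (\<lambda>k. bform g v y * x k)"
  unfolding apply_mat_def rank_one_def bform_def V2_def
  by (rule ext) (auto simp: sum_distrib_left sum_distrib_right mult.assoc mult.left_commute mult.commute)

lemma mat_mult_rank_one: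
  "mat_mult g (rank_one g x y) (rank_one g z w) = (\<lambda>k l. bform g z y * rank_one g x w k l)"
  unfolding mat_mult_def rank_one_def bform_def
  by (intro ext) (auto simp: sum_distrib_left sum_distrib_right mult.assoc mult.left_commute mult.commute)

lemma bracket_rank_one:
  "bracket g (rank_one g x x) (rank_one g y y)
     = (\<lambda>k l. bform g y x * rank_one g x y k l + bform g x y * rank_one g y x k l)"
  unfolding bracket_def mat_mult_rank_one by simp

lemma sp2_Mat2: "X \<in> sp2 g \<Longrightarrow> X \<in> Mat2 g"
  by (simp add: sp2_def)

lemma sp2_self_adjoint:
  "X \<in> sp2 g \<Longrightarrow> v \<in> V2 g \<Longrightarrow> w \<in> V2 g \<Longrightarrow> bform g (apply_mat g X v) w = bform g v (apply_mat g X w)"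
  unfolding sp2_def by (auto intro: bit_eq_if_add_eq_0 simp: pair2_eq_bform)

lemma sp2I:
  assumes "X \<in> Mat2 g"
    and "\<And>v w. v \<in> V2 g \<Longrightarrow> w \<in> V2 g \<Longrightarrow> bform g (apply_mat g X v) w = bform g v (apply_mat g X w)"
  shows "X \<in> sp2 g"
  using assms unfolding sp2_def pair2_eq_bform by simp

lemma rank_one_self_sp2: "x \<in> V2 g \<Longrightarrow> rank_one g x x \<in> sp2 g"
  by (rule sp2I[OF rank_one_Mat2])
    (simp only: apply_rank_one bform_scale_left bform_scale_right, simp add: bform_sym[of g x] mult.commute)

lemma rank_one_sym_sp2:
  assumes x: "x \<in> V2 g" and y: "y \<in> V2 g"
  shows "rank_one_sym g x y \<in> sp2 g"
proof (rule sp2I)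
  show "rank_one_sym g x y \<in> Mat2 g"
    by (simp add: rank_one_sym_def rank_one_def Mat2_def)
  fix v w
  show "bform g (apply_mat g (rank_one_sym g x y) v) w = bform g v (apply_mat g (rank_one_sym g x y) w)"
    unfolding rank_one_sym_def apply_mat_add apply_rank_one[OF x] apply_rank_one[OF y]
      bform_add_left bform_add_right bform_scale_left bform_scale_right
    by (simp add: bform_sym[of g x] bform_sym[of g y] mult.commute add.commute)
qed

lemma sp2_sum:
  assumes X: "\<And>s. s \<in> A \<Longrightarrow> X s \<in> sp2 g"
  shows "(\<lambda>k l. \<Sum>s\<in>A. a s * X s k l) \<in> sp2 g"
proof (rule sp2I)
  show "(\<lambda>k l. \<Sum>s\<in>A. a s * X s k l) \<in> Mat2 g"
    using X by (simp add: Mat2_def sp2_def)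
  fix v w assume v: "v \<in> V2 g" and w: "w \<in> V2 g"
  show "bform g (apply_mat g (\<lambda>k l. \<Sum>s\<in>A. a s * X s k l) v) w
      = bform g v (apply_mat g (\<lambda>k l. \<Sum>s\<in>A. a s * X s k l) w)"
    unfolding apply_mat_sum bform_sum_left bform_sum_right
    by (intro sum.cong refl arg_cong2[where f="(*)"]) (rule sp2_self_adjoint[OF X v w])
qed

section \<open>Bases of sp2 from a basis with a dual basis\<close>

definition in_span :: "'i set \<Rightarrow> ('i \<Rightarrow> nat \<Rightarrow> bit) \<Rightarrow> (nat \<Rightarrow> bit) \<Rightarrow> bool" where
  "in_span I C v \<longleftrightarrow> (\<exists>\<alpha>. v = (\<lambda>k. \<Sum>i\<in>I. \<alpha> i * C i k))"

lemma in_span_member: "finite I \<Longrightarrow> i \<in> I \<Longrightarrow> in_span I C (C i)"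
  unfolding in_span_def
  by (rule exI[of _ "\<lambda>j. if j = i then 1 else 0"]) (simp add: sum.delta)

lemma in_span_sum:
  assumes "\<And>s. s \<in> A \<Longrightarrow> in_span I C (x s)"
  shows "in_span I C (\<lambda>k. \<Sum>s\<in>A. a s * x s k)"
proof -
  obtain f where f: "\<forall>s\<in>A. x s = (\<lambda>k. \<Sum>i\<in>I. f s i * C i k)"
    using assms unfolding in_span_def by metis
  have "(\<lambda>k. \<Sum>s\<in>A. a s * x s k) = (\<lambda>k. \<Sum>i\<in>I. (\<Sum>s\<in>A. a s * f s i) * C i k)"
  proof
    fix k
    have "(\<Sum>s\<in>A. a s * x s k) = (\<Sum>s\<in>A. a s * (\<Sum>i\<in>I. f s i * C i k))"
      using f by (intro sum.cong) auto
    also have "\<dots> = (\<Sum>i\<in>I. (\<Sum>s\<in>A. a s * f s i) * C i k)"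
      by (simp add: sum_distrib_left sum_distrib_right mult.assoc) (rule sum.swap)
    finally show "(\<Sum>s\<in>A. a s * x s k) = (\<Sum>i\<in>I. (\<Sum>s\<in>A. a s * f s i) * C i k)" .
  qed
  then show ?thesis unfolding in_span_def by (intro exI[of _ "\<lambda>i. \<Sum>s\<in>A. a s * f s i"])
qed

lemma in_span_add: "in_span I C x \<Longrightarrow> in_span I C y \<Longrightarrow> in_span I C (\<lambda>k. x k + y k)"
  unfolding in_span_def
  by (elim exE, rule exI[of _ "\<lambda>i. _ i + _ i"]) (simp add: distrib_right sum.distrib)

definition upper_pairs :: "'i::linorder set \<Rightarrow> ('i \<times> 'i) set" where
  "upper_pairs I = {(i, j). i \<in> I \<and> j \<in> I \<and> i \<le> j}"

definition sym_family :: "nat \<Rightarrow> ('i \<Rightarrow> nat \<Rightarrow> bit) \<Rightarrow> 'i \<times> 'i \<Rightarrow> nat \<Rightarrow> nat \<Rightarrow> bit" where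
  "sym_family g C = (\<lambda>(i, j). if i = j then rank_one g (C i) (C i) else rank_one_sym g (C i) (C j))"

lemma finite_upper_pairs: "finite I \<Longrightarrow> finite (upper_pairs I)"
  by (rule finite_subset[of _ "I \<times> I"]) (auto simp: upper_pairs_def)

lemma is_F2_basis_cong:
  assumes "\<And>s. s \<in> S \<Longrightarrow> f s = f' s"
  shows "is_F2_basis S f V = is_F2_basis S f' V"
proof -
  have "(\<lambda>k l. \<Sum>s\<in>S. lam s * f s k l) = (\<lambda>k l. \<Sum>s\<in>S. lam s * f' s k l)" for lam
    using assms by (intro ext sum.cong) auto
  then show ?thesis unfolding is_F2_basis_def using assms by auto
qed

locale dual_bases =
  fixes g :: nat and I :: "'i::linorder set" and C D :: "'i \<Rightarrow> nat \<Rightarrow> bit"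
  assumes finite_I: "finite I"
    and C_V2: "i \<in> I \<Longrightarrow> C i \<in> V2 g"
    and D_V2: "p \<in> I \<Longrightarrow> D p \<in> V2 g"
    and dual: "i \<in> I \<Longrightarrow> p \<in> I \<Longrightarrow> bform g (C i) (D p) = (if i = p then 1 else 0)"
    and spanning: "v \<in> V2 g \<Longrightarrow> in_span I C v"
begin

lemma expansion: "v \<in> V2 g \<Longrightarrow> v = (\<lambda>k. \<Sum>p\<in>I. bform g v (D p) * C p k)"
proof -
  assume "v \<in> V2 g"
  then obtain \<alpha> where \<alpha>: "v = (\<lambda>k. \<Sum>i\<in>I. \<alpha> i * C i k)"
    using spanning by (auto simp: in_span_def)
  have "bform g v (D p) = \<alpha> p" if p: "p \<in> I" for p
  proof -
    have "bform g v (D p) = (\<Sum>i\<in>I. \<alpha> i * bform g (C i) (D p))"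
      by (subst \<alpha>) (rule bform_sum_left)
    also have "\<dots> = (\<Sum>i\<in>I. if i = p then \<alpha> i else 0)"
      by (rule sum.cong) (simp_all add: dual p)
    also have "\<dots> = \<alpha> p" using p finite_I by (simp add: sum.delta')
    finally show ?thesis .
  qed
  then show ?thesis by (subst (1) \<alpha>) (auto intro!: ext sum.cong)
qed

definition coord :: "(nat \<Rightarrow> nat \<Rightarrow> bit) \<Rightarrow> 'i \<Rightarrow> 'i \<Rightarrow> bit" where
  "coord X p q = bform g (apply_mat g X (D p)) (D q)"

lemma coord_sym: "X \<in> sp2 g \<Longrightarrow> p \<in> I \<Longrightarrow> q \<in> I \<Longrightarrow> coord X p q = coord X q p"
  unfolding coord_def using sp2_self_adjoint D_V2 bform_sym by metis

lemma sp2_expansion: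
  assumes X: "X \<in> sp2 g" and v: "v \<in> V2 g"
  shows "apply_mat g X v = (\<lambda>k. \<Sum>p\<in>I. (\<Sum>q\<in>I. coord X p q * bform g v (C q)) * C p k)"
proof -
  have "bform g (apply_mat g X v) (D p) = (\<Sum>q\<in>I. coord X p q * bform g v (C q))" if p: "p \<in> I" for p
  proof -
    have "bform g (apply_mat g X v) (D p) = bform g v (apply_mat g X (D p))"
      using sp2_self_adjoint[OF X v D_V2[OF p]] .
    also have "apply_mat g X (D p) = (\<lambda>k. \<Sum>q\<in>I. coord X p q * C q k)"
      unfolding coord_def by (rule expansion[OF apply_mat_V2])
    finally show ?thesis by (simp only: bform_sum_right)
  qed
  then show ?thesis
    by (subst expansion[OF apply_mat_V2[of g X v]]) (intro ext sum.cong, auto)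
qed

lemma sp2_eq_if_coord_eq:
  assumes X: "X \<in> sp2 g" and Y: "Y \<in> sp2 g"
    and eq: "\<And>p q. p \<in> I \<Longrightarrow> q \<in> I \<Longrightarrow> coord X p q = coord Y p q"
  shows "X = Y"
proof (rule Mat2_eqI[OF sp2_Mat2[OF X] sp2_Mat2[OF Y]])
  fix v assume v: "v \<in> V2 g"
  show "apply_mat g X v = apply_mat g Y v"
    unfolding sp2_expansion[OF X v] sp2_expansion[OF Y v]
    by (intro ext sum.cong refl arg_cong2[where f="(*)"]) (simp add: eq)
qed

lemma coord_sum: "coord (\<lambda>k l. \<Sum>s\<in>A. a s * X s k l) p q = (\<Sum>s\<in>A. a s * coord (X s) p q)"
  unfolding coord_def apply_mat_sum bform_sum_left ..

lemma coord_rank_one: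
  assumes "i \<in> I" "j \<in> I" "p \<in> I" "q \<in> I"
  shows "coord (rank_one g (C i) (C j)) p q = (if j = p \<and> i = q then 1 else 0)"
  unfolding coord_def apply_rank_one[OF C_V2[OF \<open>i \<in> I\<close>]] bform_scale_left
  using assms by (simp add: bform_sym[of g "D p"] dual)

lemma coord_sym_family:
  assumes s: "s \<in> upper_pairs I" and p: "p \<in> I" and q: "q \<in> I"
  shows "coord (sym_family g C s) p q = (if s = (min p q, max p q) then 1 else 0)"
proof -
  obtain i j where ij: "s = (i, j)" and "i \<in> I" "j \<in> I" "i \<le> j"
    using s by (auto simp: upper_pairs_def)
  with p q show ?thesis
    by (auto simp: sym_family_def rank_one_sym_def coord_def apply_mat_add bform_add_left
        coord_rank_one[unfolded coord_def] min_def max_def)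
qed

lemma coord_sum_sym_family:
  assumes p: "p \<in> I" and q: "q \<in> I"
  shows "coord (\<lambda>k l. \<Sum>s\<in>upper_pairs I. lam s * sym_family g C s k l) p q = lam (min p q, max p q)"
proof -
  have mm: "(min p q, max p q) \<in> upper_pairs I"
    using p q by (auto simp: upper_pairs_def min_def max_def)
  have "coord (\<lambda>k l. \<Sum>s\<in>upper_pairs I. lam s * sym_family g C s k l) p q
      = (\<Sum>s\<in>upper_pairs I. if s = (min p q, max p q) then lam s else 0)"
    unfolding coord_sum by (rule sum.cong) (simp_all add: coord_sym_family p q)
  also have "\<dots> = lam (min p q, max p q)"
    using mm finite_upper_pairs[OF finite_I] by (simp add: sum.delta')
  finally show ?thesis .
qed

lemma sym_family_sp2: "s \<in> upper_pairs I \<Longrightarrow> sym_family g C s \<in> sp2 g"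
  by (auto simp: sym_family_def upper_pairs_def intro!: rank_one_self_sp2 rank_one_sym_sp2 C_V2)

theorem sym_family_is_F2_basis: "is_F2_basis (upper_pairs I) (sym_family g C) (sp2 g)"
  unfolding is_F2_basis_def
proof (intro conjI ballI)
  fix s assume "s \<in> upper_pairs I"
  then show "sym_family g C s \<in> sp2 g" by (rule sym_family_sp2)
next
  fix X assume X: "X \<in> sp2 g"
  let ?comb = "\<lambda>lam. (\<lambda>k l. \<Sum>s\<in>upper_pairs I. lam s * sym_family g C s k l)"
  define lam0 where "lam0 = (\<lambda>s. if s \<in> upper_pairs I then coord X (fst s) (snd s) else 0)"
  have coord_X: "coord X p q = lam0 (min p q, max p q)" if "p \<in> I" "q \<in> I" for p q
    using that coord_sym[OF X that]
    by (cases "p \<le> q") (auto simp: lam0_def upper_pairs_def min_def max_def)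
  show "\<exists>!lam. (\<forall>s. s \<notin> upper_pairs I \<longrightarrow> lam s = 0) \<and> X = ?comb lam"
  proof (rule ex1I[of _ lam0])
    have "X = ?comb lam0"
    proof (rule sp2_eq_if_coord_eq[OF X sp2_sum[OF sym_family_sp2]])
      fix p q assume "p \<in> I" "q \<in> I"
      then show "coord X p q = coord (?comb lam0) p q"
        by (simp only: coord_X coord_sum_sym_family)
    qed
    then show "(\<forall>s. s \<notin> upper_pairs I \<longrightarrow> lam0 s = 0) \<and> X = ?comb lam0"
      by (simp add: lam0_def)
  next
    fix lam assume lam: "(\<forall>s. s \<notin> upper_pairs I \<longrightarrow> lam s = 0) \<and> X = ?comb lam"
    show "lam = lam0"
    proof
      fix s
      show "lam s = lam0 s"
      proof (cases "s \<in> upper_pairs I")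
        case False
        then show ?thesis using lam by (simp add: lam0_def del: split_paired_All)
      next
        case True
        then obtain p q where s: "s = (p, q)" "p \<in> I" "q \<in> I" "p \<le> q"
          by (auto simp: upper_pairs_def)
        then have "lam (min p q, max p q) = lam0 (min p q, max p q)"
          using lam coord_sum_sym_family[of p q lam] coord_X[of p q] by simp
        then show ?thesis using s by (simp add: min_def max_def)
      qed
    qed
  qed
qed

end

section \<open>The reduced vectors \<gamma>_i\<close>

definition cbar :: "nat \<Rightarrow> nat \<Rightarrow> nat \<Rightarrow> bit" where
  "cbar g i = (\<lambda>k. (if i div 2 \<le> k \<and> k < g then 1 else 0) + (if k = g + (i - 1) div 2 then 1 else 0))"

lemma sum_avec: "1 \<le> a \<Longrightarrow> (\<Sum>m\<in>{a..g}. avec g m k) = (if a - 1 \<le> k \<and> k < g then 1 else 0)"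
proof -
  assume a: "1 \<le> a"
  have "(\<Sum>m\<in>{a..g}. avec g m k) = (\<Sum>m\<in>{a..g}. if m = k + 1 then 1 else 0)"
    by (rule sum.cong) (use a in \<open>auto simp: avec_def\<close>)
  also have "\<dots> = (if a - 1 \<le> k \<and> k < g then 1 else 0)"
    using a by (simp add: sum.delta') arith
  finally show ?thesis .
qed

lemma cref_eq: "1 \<le> i \<Longrightarrow>
    cref g i k = (if i div 2 \<le> k \<and> k < g then 1 else 0) + (if k = g + (i - 1) div 2 then 1 else 0)"
proof (cases "odd i")
  case True
  assume i: "1 \<le> i"
  have "(i + 1) div 2 - 1 = i div 2" "g + (i + 1) div 2 - 1 = g + (i - 1) div 2"
    using True i by presburger+
  with True sum_avec[of "(i + 1) div 2" g k] show ?thesis by (simp add: cref_def bvec_def)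
next
  case False
  assume i: "1 \<le> i"
  have "g + i div 2 - 1 = g + (i - 1) div 2"
    using False i by presburger
  with False sum_avec[of "i div 2 + 1" g k] show ?thesis by (simp add: cref_def bvec_def)
qed

lemma of_int_cref: "1 \<le> i \<Longrightarrow> (\<lambda>k. of_int (cref g i k) :: bit) = cbar g i"
  by (rule ext) (simp add: cref_eq cbar_def)

lemma cbar_V2: "i \<in> {1..2*g} \<Longrightarrow> cbar g i \<in> V2 g"
  by (auto simp: V2_def cbar_def)

lemma bform_cbar:
  assumes i: "i \<in> {1..2*g}" and j: "j \<in> {1..2*g}"
  shows "bform g (cbar g i) (cbar g j) = (if i = j then 0 else 1)"
proof -
  have "bform g (cbar g i) (cbar g j)
      = (\<Sum>k<g. (if k = (j - 1) div 2 then (if i div 2 \<le> k then 1 else 0) else 0)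
              + (if k = (i - 1) div 2 then (if j div 2 \<le> k then 1 else 0) else 0))"
    unfolding bform_eq_sum_pairs by (rule sum.cong) (auto simp: cbar_def)
  also have "\<dots> = (if i div 2 \<le> (j - 1) div 2 then 1 else 0) + (if j div 2 \<le> (i - 1) div 2 then 1 else 0)"
  proof -
    have "(j - 1) div 2 < g" "(i - 1) div 2 < g" using i j by auto
    then show ?thesis by (simp add: sum.distrib sum.delta)
  qed
  also have "\<dots> = (if i = j then 0 else 1)"
  proof (cases i j rule: linorder_cases)
    case less
    with i have "i div 2 \<le> (j - 1) div 2" "\<not> j div 2 \<le> (i - 1) div 2"
      unfolding atLeastAtMost_iff by presburger+
    with less show ?thesis by simp
  next
    case greater
    with j have "\<not> i div 2 \<le> (j - 1) div 2" "j div 2 \<le> (i - 1) div 2"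
      unfolding atLeastAtMost_iff by presburger+
    with greater show ?thesis by simp
  qed simp
  finally show ?thesis .
qed

lemma unit2_low: "a < g \<Longrightarrow> unit2 a = (\<lambda>k. cbar g (2*a+1) k + cbar g (2*a+2) k)"
proof
  fix k assume a: "a < g"
  have e: "(2*a+1) div 2 = a" "(2*a+2) div 2 = a + 1" "(2*a+1-1) div 2 = a" "(2*a+2-1) div 2 = a"
    by presburger+
  show "unit2 a k = cbar g (2*a+1) k + cbar g (2*a+2) k"
    using a unfolding cbar_def e unit2_def by (simp add: ac_simps)
qed

lemma unit2_high: "a < g \<Longrightarrow> unit2 (g + a) = (\<lambda>k. cbar g (2*a+2) k + (\<Sum>b\<in>{a+1..<g}. 1 * unit2 b k))"
proof
  fix k assume a: "a < g"
  have e: "(2*a+2) div 2 = a + 1" "(2*a+2-1) div 2 = a" by presburger+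
  have "(\<Sum>b\<in>{a+1..<g}. 1 * unit2 b k) = (if a + 1 \<le> k \<and> k < g then 1 else 0)"
    by (simp add: unit2_def sum.delta')
  then show "unit2 (g + a) k = cbar g (2*a+2) k + (\<Sum>b\<in>{a+1..<g}. 1 * unit2 b k)"
    unfolding cbar_def e unit2_def by (simp add: ac_simps)
qed

lemma in_span_cbar: "v \<in> V2 g \<Longrightarrow> in_span {1..2*g} (cbar g) v"
proof -
  have low: "in_span {1..2*g} (cbar g) (unit2 a)" if a: "a < g" for a
    unfolding unit2_low[OF a] using a by (intro in_span_add in_span_member) auto
  have "in_span {1..2*g} (cbar g) (unit2 m)" if m: "m < 2*g" for m
  proof (cases "m < g")
    case True
    then show ?thesis using low by blast
  next
    case False
    then obtain a where a: "m = g + a" "a < g"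
      using m by (metis add_less_cancel_left le_Suc_ex mult_2 not_less)
    show ?thesis
      unfolding a(1) unit2_high[OF a(2)] using a(2)
      by (intro in_span_add in_span_sum in_span_member low) auto
  qed
  moreover assume "v \<in> V2 g"
  ultimately show ?thesis
    by (subst V2_eq_sum_unit2) (auto intro: in_span_sum)
qed

definition cdual :: "nat \<Rightarrow> nat \<Rightarrow> nat \<Rightarrow> bit" where
  "cdual g p = (\<lambda>k. cbar g p k + (\<Sum>j\<in>{1..2*g}. cbar g j k))"

lemma cdual_V2: "p \<in> {1..2*g} \<Longrightarrow> cdual g p \<in> V2 g"
  using cbar_V2 by (simp add: cdual_def V2_def)

lemma bform_cbar_sum_cbar:
  assumes i: "i \<in> {1..2*g}"
  shows "bform g (cbar g i) (\<lambda>k. \<Sum>j\<in>{1..2*g}. cbar g j k) = 1"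
proof -
  have "bform g (cbar g i) (\<lambda>k. \<Sum>j\<in>{1..2*g}. cbar g j k) = (\<Sum>j\<in>{1..2*g}. if i = j then 0 else 1)"
    unfolding bform_sum_right[where a="\<lambda>_. 1", simplified]
    using i by (intro sum.cong) (simp_all add: bform_cbar)
  also have "\<dots> = (\<Sum>j\<in>{1..2*g} - {i}. 1)"
    using i by (simp add: sum.If_cases Diff_eq Int_commute)
  also have "\<dots> = of_nat (2*g - 1)" using i by simp
  also have "\<dots> = 1" using i by (intro of_nat_bit_odd) auto
  finally show ?thesis .
qed

lemma bform_cbar_cdual:
  "i \<in> {1..2*g} \<Longrightarrow> p \<in> {1..2*g} \<Longrightarrow> bform g (cbar g i) (cdual g p) = (if i = p then 1 else 0)"
  unfolding cdual_def bform_add_right using bform_cbar_sum_cbar by (simp add: bform_cbar)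

lemma dual_bases_cbar: "dual_bases g {1..2*g} (cbar g) (cdual g)"
  by unfold_locales (simp_all only: cbar_V2 cdual_V2 bform_cbar_cdual in_span_cbar finite_atLeastAtMost)

section \<open>The reduced transvections\<close>

lemma tbar_eq_rank_one:
  assumes c: "(\<lambda>k. (of_int (c k) :: bit)) = y"
  shows "tbar g c = rank_one g y y"
proof (intro ext)
  fix k l
  show "tbar g c k l = rank_one g y y k l"
  proof (cases "k < 2*g \<and> l < 2*g")
    case True
    have unit: "(\<lambda>k. of_int (unitvec l k) :: bit) = unit2 l"
      by (rule ext) (simp add: unitvec_def unit2_def)
    have "(of_int (transvection g c (unitvec l) k - unitvec l k) :: bit)
        = of_int (pair g (unitvec l) c) * of_int (c k)"
      by (simp add: transvection_def)
    also have "\<dots> = y (partner g l) * y k"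
      unfolding of_int_pair unit c using True by (simp add: bform_unit2 fun_cong[OF c])
    finally show ?thesis
      using True by (simp add: tbar_def reduce_endo_def rank_one_def mult.commute)
  next
    case False
    then show ?thesis by (auto simp: tbar_def reduce_endo_def rank_one_def)
  qed
qed

theorem lemma3p2:
  fixes g :: nat and c :: "nat \<Rightarrow> nat \<Rightarrow> int"
  assumes cM: "\<And>i. 1 \<le> i \<Longrightarrow> i \<le> 2*g \<Longrightarrow> c i \<in> Mset g"
    and ccong: "\<And>i k. 1 \<le> i \<Longrightarrow> i \<le> 2*g \<Longrightarrow> (2::int) dvd (c i k - cref g i k)"
  shows "is_F2_basis
           ({(i, i) | i. 1 \<le> i \<and> i \<le> 2*g} \<union> {(i, j) | i j. 1 \<le> i \<and> i < j \<and> j \<le> 2*g})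
           (\<lambda>(i, j). if i = j then tbar g (c i) else bracket g (tbar g (c i)) (tbar g (c j)))
           (sp2 g)"
proof -
  have tbar: "tbar g (c i) = rank_one g (cbar g i) (cbar g i)" if "i \<in> {1..2*g}" for i
  proof (rule tbar_eq_rank_one)
    have "(\<lambda>k. of_int (c i k) :: bit) = (\<lambda>k. of_int (cref g i k))"
      using that by (intro ext of_int_bit_eq_if_even_diff ccong) auto
    then show "(\<lambda>k. of_int (c i k) :: bit) = cbar g i"
      using that of_int_cref by simp
  qed
  have family: "(\<lambda>(i, j). if i = j then tbar g (c i) else bracket g (tbar g (c i)) (tbar g (c j))) s
      = sym_family g (cbar g) s" if "s \<in> upper_pairs {1..2*g}" for s
    using that tbar bform_cbar
    by (auto simp: upper_pairs_def sym_family_def bracket_rank_one rank_one_sym_def)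
  have "{(i, i) | i. 1 \<le> i \<and> i \<le> 2*g} \<union> {(i, j) | i j. 1 \<le> i \<and> i < j \<and> j \<le> 2*g}
      = upper_pairs {1..2*g}"
    by (auto simp: upper_pairs_def)
  moreover have "is_F2_basis (upper_pairs {1..2*g})
      (\<lambda>(i, j). if i = j then tbar g (c i) else bracket g (tbar g (c i)) (tbar g (c j))) (sp2 g)"
    using is_F2_basis_cong[of "upper_pairs {1..2*g}", OF family]
      dual_bases.sym_family_is_F2_basis[OF dual_bases_cbar] by simp
  ultimately show ?thesis by simp
qed

end
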